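(* Let $0\leq B<1$ and $\Delta\geq3$, and set $d=\Delta-1$. Suppose $R_1,\dots,R_q,C_1,\dots,C_q$ solve the system \[R_i\propto\Big(BC_i+\sum_{j\neq i}C_j\Big)^{d},\qquad C_j\propto\Big(BR_j+\sum_{i\neq j}R_i\Big)^{d}\qquad(i,j\in[q])\] (proportionality constants independent of $i$, resp. $j$) and satisfy $R_i\propto C_i$ for all $i\in[q]$. Then $R_1=\dots=R_q$ and $C_1=\dots=C_q$.
   Context: This system is the tree recursion (fixpoint) system for the antiferromagnetic $q$-state Potts model with parameter $B$ (interaction matrix with diagonal entries $B$ and off-diagonal entries $1$); $B=0$ corresponds to $q$-colorings. *)

theory Defs
  imports Complex_Main
begin

definition potts_map :: "nat \<Rightarrow> real \<Rightarrow> nat \<Rightarrow> (nat \<Rightarrow> real) \<Rightarrow> nat \<Rightarrow> real" where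
  "potts_map q B d x i = (B * x i + (\<Sum>j\<in>{..<q} - {i}. x j)) ^ d"

definition propto :: "nat \<Rightarrow> (nat \<Rightarrow> real) \<Rightarrow> (nat \<Rightarrow> real) \<Rightarrow> bool" where
  "propto q u v \<longleftrightarrow> (\<exists>c. \<forall>i<q. u i = c * v i)"

end

theory Submission
  imports Defs
begin

text \<open>Since R is proportional to C, the second equation says that C is proportional to the
  Potts map applied to C itself. Writing the base of that map as
  (\<Sum>j<q. C j) - (1 - B) * C i shows that for B < 1 it is antitone in C i, so a larger
  coordinate of C would be proportional to a smaller value: all coordinates of C, and hence
  of R, coincide.\<close>

lemma potts_base_eq_total_minus:
  fixes x :: "nat \<Rightarrow> real"
  assumes "i < q"
  shows "B * x i + (\<Sum>j\<in>{..<q} - {i}. x j) = (\<Sum>j<q. x j) - (1 - B) * x i"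
proof -
  have "(\<Sum>j<q. x j) = x i + (\<Sum>j\<in>{..<q} - {i}. x j)"
    using assms sum.remove[of "{..<q}" i x] by auto
  then show ?thesis
    by (simp add: algebra_simps)
qed

lemma potts_base_nonneg:
  fixes x :: "nat \<Rightarrow> real"
  assumes "0 \<le> B" and "\<forall>k<q. 0 \<le> x k" and "i < q"
  shows "0 \<le> B * x i + (\<Sum>k\<in>{..<q} - {i}. x k)"
  using assms by (auto intro!: add_nonneg_nonneg sum_nonneg)

lemma potts_map_nonneg:
  assumes "0 \<le> B" and "\<forall>k<q. 0 \<le> x k" and "i < q"
  shows "0 \<le> potts_map q B d x i"
  unfolding potts_map_def using potts_base_nonneg[OF assms] by simp

lemma potts_map_scale:
  assumes "\<forall>j<q. y j = a * x j" and "i < q"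
  shows "potts_map q B d y i = a ^ d * potts_map q B d x i"
proof -
  have "(\<Sum>j\<in>{..<q} - {i}. y j) = a * (\<Sum>j\<in>{..<q} - {i}. x j)"
    using assms(1) by (simp add: sum_distrib_left)
  then show ?thesis
    using assms unfolding potts_map_def power_mult_distrib[symmetric]
    by (simp add: algebra_simps)
qed

lemma potts_map_antitone:
  assumes "0 \<le> B" and "B \<le> 1" and "\<forall>k<q. 0 \<le> x k"
    and "i < q" and "j < q" and "x i \<le> x j"
  shows "potts_map q B d x j \<le> potts_map q B d x i"
proof -
  have "(1 - B) * x i \<le> (1 - B) * x j"
    using assms by (intro mult_left_mono) auto
  moreover have "0 \<le> B * x j + (\<Sum>k\<in>{..<q} - {j}. x k)"
    using potts_base_nonneg assms(1,3,5) .
  ultimately show ?thesis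
    unfolding potts_map_def potts_base_eq_total_minus[OF \<open>i < q\<close>]
      potts_base_eq_total_minus[OF \<open>j < q\<close>]
    by (intro power_mono) linarith+
qed

lemma const_if_propto_antitone:
  fixes x g :: "nat \<Rightarrow> real"
  assumes pos: "\<forall>i<q. 0 < x i" and nonneg: "\<forall>i<q. 0 \<le> g i"
    and scaled: "\<forall>i<q. x i = k * g i"
    and anti: "\<And>i j. i < q \<Longrightarrow> j < q \<Longrightarrow> x i \<le> x j \<Longrightarrow> g j \<le> g i"
    and "i < q" and "j < q"
  shows "x i = x j"
proof -
  have "0 < k"
    using pos nonneg scaled \<open>i < q\<close> by (metis mult_nonpos_nonneg not_le)
  have "\<not> x a < x b" if "a < q" "b < q" for a b
  proof
    assume "x a < x b"
    then have "k * g b \<le> k * g a"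
      using anti that \<open>0 < k\<close> by (simp add: less_imp_le)
    with \<open>x a < x b\<close> show False
      using scaled that by auto
  qed
  then show ?thesis
    using assms(5,6) by (meson linorder_neqE_linordered_idom)
qed

theorem lemma25:
  fixes q \<Delta> :: nat and B :: real and R C :: "nat \<Rightarrow> real"
  assumes "0 \<le> B" and "B < 1" and "\<Delta> \<ge> 3"
    and "\<forall>i<q. R i > 0" and "\<forall>i<q. C i > 0"
    and "propto q R (potts_map q B (\<Delta> - 1) C)"
    and "propto q C (potts_map q B (\<Delta> - 1) R)"
    and "propto q R C"
  shows "(\<forall>i<q. \<forall>j<q. R i = R j) \<and> (\<forall>i<q. \<forall>j<q. C i = C j)"
proof -
  obtain a where a: "\<forall>i<q. R i = a * C i"
    using assms(8) unfolding propto_def by blast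
  obtain c where c: "\<forall>i<q. C i = c * potts_map q B (\<Delta> - 1) R i"
    using assms(7) unfolding propto_def by blast
  have C_fixed: "\<forall>i<q. C i = (c * a ^ (\<Delta> - 1)) * potts_map q B (\<Delta> - 1) C i"
    using c potts_map_scale[OF a] by simp
  have C_nonneg: "\<forall>k<q. 0 \<le> C k"
    using assms(5) by (simp add: less_imp_le)
  have C_const: "\<forall>i<q. \<forall>j<q. C i = C j"
  proof (intro allI impI)
    fix i j assume "i < q" "j < q"
    show "C i = C j"
      using assms(5) _ C_fixed _ \<open>i < q\<close> \<open>j < q\<close>
    proof (rule const_if_propto_antitone)
      show "\<forall>k<q. 0 \<le> potts_map q B (\<Delta> - 1) C k"
        using potts_map_nonneg[OF assms(1) C_nonneg] by blast
      show "potts_map q B (\<Delta> - 1) C l \<le> potts_map q B (\<Delta> - 1) C k"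
        if "k < q" "l < q" "C k \<le> C l" for k l
        using potts_map_antitone[OF assms(1) _ C_nonneg that] assms(2) by simp
    qed
  qed
  moreover have "\<forall>i<q. \<forall>j<q. R i = R j"
    using a C_const by metis
  ultimately show ?thesis by blast
qed

end
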